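(* Let $\alpha>0$ and $\tau\ge 0$. Consider the variational problem of minimizing $$\int_0^1\frac{x}{x+\alpha g(x)}\,dx$$ over measurable functions $g:[0,1]\to[0,\infty)$ satisfying $\int_0^1 g(x)\,dx=\tau$. The optimal (minimum) value of this problem is $$\max\left(1-\sqrt{\tfrac{2}{3}\alpha\tau},\ \frac{4}{9}\cdot\frac{1}{\frac12+\alpha\tau}\right).$$ *)

theory Defs
  imports "HOL-Analysis.Analysis"
begin

end

theory Submission
  imports Defs
begin

(* Lagrangian duality. For a multiplier c > 0, the pointwise minimiser of x / (x + h) + h / c^2
   over h >= 0 is h = max 0 (c sqrt x - x). Integrating the pointwise inequality gives, for every
   admissible g,  LINT x / (x + alpha g) >= F c + (H c - alpha tau) / c^2, where F c and H c are the
   integrals of the ratio at the minimiser and of the minimiser itself. If H c = alpha tau the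
   bound F c is attained by g = minimiser / alpha, and evaluating F c in closed form gives the two
   branches of the max (c^2 < 1 when alpha tau < 1/6, c >= 1 otherwise). For tau = 0 no
   multiplier balances the budget; letting c tend to 0 in the bound gives 1, attained by g = 0. *)

definition opt_density :: "real \<Rightarrow> real \<Rightarrow> real" where
  "opt_density c x = max 0 (c * sqrt x - x)"

definition opt_density_integral :: "real \<Rightarrow> real \<Rightarrow> real" where
  "opt_density_integral c b =
     (if b \<le> c\<^sup>2 then 2 * c / 3 * (b * sqrt b) - b\<^sup>2 / 2 else c ^ 4 / 6)"

definition opt_ratio_integral :: "real \<Rightarrow> real \<Rightarrow> real" where
  "opt_ratio_integral c b = (if b \<le> c\<^sup>2 then 2 / (3 * c) * (b * sqrt b) else b - c\<^sup>2 / 3)"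

lemma has_real_derivative_mult_sqrt:
  assumes "0 < x"
  shows "((\<lambda>x. x * sqrt x) has_real_derivative 3 / 2 * sqrt x) (at x)"
proof -
  have "((\<lambda>x. x * sqrt x) has_real_derivative 1 * sqrt x + inverse (sqrt x) / 2 * x) (at x)"
    using assms by (intro DERIV_mult DERIV_ident DERIV_real_sqrt) auto
  moreover have "1 * sqrt x + inverse (sqrt x) / 2 * x = 3 / 2 * sqrt x"
    using assms by (simp add: field_simps)
  ultimately show ?thesis by simp
qed

lemma has_integral_piecewise_primitive:
  fixes F G f :: "real \<Rightarrow> real"
  assumes "a \<le> b" and F: "continuous_on {a..b} F" and G: "continuous_on {a..b} G" and "F k = G k"
    and F': "\<And>x. x \<in> {a<..<b} \<Longrightarrow> x < k \<Longrightarrow> (F has_real_derivative f x) (at x)"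
    and G': "\<And>x. x \<in> {a<..<b} \<Longrightarrow> k < x \<Longrightarrow> (G has_real_derivative f x) (at x)"
  shows "(f has_integral (if b \<le> k then F b else G b) - (if a \<le> k then F a else G a)) {a..b}"
proof (rule fundamental_theorem_of_calculus_strong[where S = "{a, b, k}"])
  show "continuous_on {a..b} (\<lambda>x. if x \<le> k then F x else G x)"
  proof (rule continuous_on_cases_le)
    show "continuous_on {x \<in> {a..b}. x \<le> k} F" by (rule continuous_on_subset[OF F]) blast
    show "continuous_on {x \<in> {a..b}. k \<le> x} G" by (rule continuous_on_subset[OF G]) blast
  qed (use assms(4) in \<open>auto intro: continuous_on_id\<close>)
next
  fix x assume x: "x \<in> {a..b} - {a, b, k}"
  then have "x \<in> {a<..<b}" by auto
  show "((\<lambda>x. if x \<le> k then F x else G x) has_vector_derivative f x) (at x)"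
    unfolding has_real_derivative_iff_has_vector_derivative[symmetric]
  proof (cases "x < k")
    case True
    show "((\<lambda>x. if x \<le> k then F x else G x) has_real_derivative f x) (at x)"
      by (rule has_field_derivative_transform_within_open[OF F'[OF \<open>x \<in> {a<..<b}\<close> True], of "{..<k}"])
        (use True in auto)
  next
    case False
    then have "k < x" using x by auto
    show "((\<lambda>x. if x \<le> k then F x else G x) has_real_derivative f x) (at x)"
      by (rule has_field_derivative_transform_within_open[OF G'[OF \<open>x \<in> {a<..<b}\<close> \<open>k < x\<close>], of "{k<..}"])
        (use \<open>k < x\<close> in auto)
  qed
qed (use assms(1) in auto)

lemma opt_density_below:
  assumes "0 \<le> c" and "0 \<le> x" and "x \<le> c\<^sup>2"
  shows "opt_density c x = c * sqrt x - x"
proof -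
  have "sqrt x * sqrt x \<le> c * sqrt x"
    using assms by (intro mult_right_mono) (auto simp: real_le_lsqrt real_sqrt_le_iff)
  then show ?thesis using assms(2) by (simp add: opt_density_def)
qed

lemma opt_density_above:
  assumes "0 \<le> c" and "c\<^sup>2 < x"
  shows "opt_density c x = 0"
proof -
  have "0 \<le> x" using zero_le_power2[of c] assms(2) by linarith
  moreover have "c < sqrt x" using assms real_less_rsqrt by blast
  ultimately have "c * sqrt x \<le> sqrt x * sqrt x"
    by (intro mult_right_mono) auto
  then show ?thesis using \<open>0 \<le> x\<close> by (simp add: opt_density_def)
qed

lemma opt_density_nonneg: "0 \<le> opt_density c x"
  by (simp add: opt_density_def)

lemma has_integral_opt_density:
  assumes "0 < c" and "0 \<le> b"
  shows "(opt_density c has_integral opt_density_integral c b) {0..b}"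
proof -
  define F :: "real \<Rightarrow> real" where "F = (\<lambda>x. 2 * c / 3 * (x * sqrt x) - x\<^sup>2 / 2)"
  have "(opt_density c has_integral
      (if b \<le> c\<^sup>2 then F b else c ^ 4 / 6) - (if 0 \<le> c\<^sup>2 then F 0 else c ^ 4 / 6)) {0..b}"
  proof (rule has_integral_piecewise_primitive[OF assms(2), where F = F and G = "\<lambda>_. c ^ 4 / 6" and k = "c\<^sup>2"])
    fix x assume x: "x \<in> {0<..<b}" "x < c\<^sup>2"
    have "(F has_real_derivative 2 * c / 3 * (3 / 2 * sqrt x) - real 2 * x ^ (2 - Suc 0) / 2) (at x)"
      unfolding F_def using x
      by (intro DERIV_diff DERIV_cmult DERIV_cdivide has_real_derivative_mult_sqrt DERIV_pow) auto
    then show "(F has_real_derivative opt_density c x) (at x)"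
      using x assms by (simp add: opt_density_below)
  next
    fix x assume x: "x \<in> {0<..<b}" "c\<^sup>2 < x"
    show "((\<lambda>_. c ^ 4 / 6) has_real_derivative opt_density c x) (at x)"
      using x assms by (simp add: opt_density_above)
  next
    show "F (c\<^sup>2) = c ^ 4 / 6"
      using assms by (simp add: F_def power2_eq_square power4_eq_xxxx)
  next
    show "continuous_on {0..b} F" unfolding F_def by (intro continuous_intros) auto
  qed (rule continuous_on_const)
  then show ?thesis unfolding opt_density_integral_def F_def by simp
qed

lemma has_integral_opt_ratio:
  assumes "0 < c" and "0 \<le> b"
  shows "((\<lambda>x. x / (x + opt_density c x)) has_integral opt_ratio_integral c b) {0..b}"
proof -
  define F :: "real \<Rightarrow> real" where "F = (\<lambda>x. 2 / (3 * c) * (x * sqrt x))"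
  define G :: "real \<Rightarrow> real" where "G = (\<lambda>x. x - c\<^sup>2 / 3)"
  have "((\<lambda>x. x / (x + opt_density c x)) has_integral
      (if b \<le> c\<^sup>2 then F b else G b) - (if 0 \<le> c\<^sup>2 then F 0 else G 0)) {0..b}"
  proof (rule has_integral_piecewise_primitive[OF assms(2), where F = F and G = G and k = "c\<^sup>2"])
    fix x assume x: "x \<in> {0<..<b}" "x < c\<^sup>2"
    have "((\<lambda>x. 2 / (3 * c) * (x * sqrt x)) has_real_derivative 2 / (3 * c) * (3 / 2 * sqrt x)) (at x)"
      using x by (intro DERIV_cmult has_real_derivative_mult_sqrt) auto
    moreover have "x / (x + opt_density c x) = 2 / (3 * c) * (3 / 2 * sqrt x)"
    proof -
      have "x / (x + opt_density c x) = x / (c * sqrt x)"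
        using x assms by (simp add: opt_density_below)
      also have "\<dots> = sqrt x / c"
        using x assms by (simp add: frac_eq_eq ac_simps)
      finally show ?thesis by simp
    qed
    ultimately show "(F has_real_derivative x / (x + opt_density c x)) (at x)"
      by (simp add: F_def)
  next
    fix x assume x: "x \<in> {0<..<b}" "c\<^sup>2 < x"
    have "0 < x" using zero_le_power2[of c] x(2) by linarith
    then show "(G has_real_derivative x / (x + opt_density c x)) (at x)"
      using x assms by (auto simp: G_def opt_density_above intro!: derivative_eq_intros)
  next
    show "F (c\<^sup>2) = G (c\<^sup>2)"
      using assms by (simp add: F_def G_def power2_eq_square)
  next
    show "continuous_on {0..b} F" unfolding F_def by (intro continuous_intros)
  next
    show "continuous_on {0..b} G" unfolding G_def by (intro continuous_intros) auto
  qed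
  then show ?thesis unfolding opt_ratio_integral_def F_def G_def by simp
qed

lemma opt_density_minimizes_lagrangian:
  assumes "0 < c" and "0 \<le> x" and "0 \<le> h"
  shows "x / (x + opt_density c x) + opt_density c x / c\<^sup>2 \<le> x / (x + h) + h / c\<^sup>2"
proof (cases "x = 0")
  case True
  then show ?thesis using assms by (simp add: opt_density_def)
next
  case False
  then have "0 < x" "0 < x + h" using assms by auto
  show ?thesis
  proof (cases "x \<le> c\<^sup>2")
    case True
    define s where "s = sqrt x"
    have s: "0 < s" "x = s\<^sup>2" using \<open>0 < x\<close> by (auto simp: s_def)
    have "opt_density c x = c * s - s\<^sup>2"
      using True assms by (simp add: opt_density_below s_def)
    then have "x / (x + opt_density c x) + opt_density c x / c\<^sup>2 = 2 * s / c - x / c\<^sup>2"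
      using s assms by (simp add: field_simps power2_eq_square)
    also have "\<dots> \<le> x / (x + h) + h / c\<^sup>2"
    proof -
      have "x / t + t / c\<^sup>2 - 2 * s / c = (s * c - t)\<^sup>2 / (t * c\<^sup>2)" if "0 < t" for t
        using s assms that by (simp add: field_simps power2_eq_square)
      then have "x / (x + h) + (x + h) / c\<^sup>2 - 2 * s / c = (s * c - (x + h))\<^sup>2 / ((x + h) * c\<^sup>2)"
        using \<open>0 < x + h\<close> .
      also have "\<dots> \<ge> 0" using \<open>0 < x + h\<close> by simp
      finally show ?thesis by (simp add: add_divide_distrib)
    qed
    finally show ?thesis .
  next
    case False
    have "h / (x + h) \<le> h / c\<^sup>2"
      using False assms \<open>0 < x + h\<close> by (intro divide_left_mono) auto
    moreover have "x / (x + h) = 1 - h / (x + h)"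
      using \<open>0 < x + h\<close> by (simp add: field_simps)
    ultimately show ?thesis using False assms \<open>0 < x\<close> by (simp add: opt_density_above)
  qed
qed

lemma set_integrable_ratio:
  fixes h :: "real \<Rightarrow> real"
  assumes "\<forall>x\<in>{0..b}. 0 \<le> h x" and "set_integrable lborel {0..b} h"
  shows "set_integrable lborel {0..b} (\<lambda>x. x / (x + h x))"
proof (rule set_integrable_bound)
  show "set_integrable lborel {0..b} (\<lambda>_. 1 :: real)"
    unfolding set_integrable_def by (rule borel_integrable_compact) auto
  have "(\<lambda>x. indicator {0..b} x *\<^sub>R h x) \<in> borel_measurable lborel"
    using assms(2) unfolding set_integrable_def by (rule borel_measurable_integrable)
  \<comment> \<open>only the restriction of \<open>h\<close> to \<open>{0..b}\<close> is known to be measurable\<close>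
  moreover have restrict: "(\<lambda>x. indicator {0..b} x *\<^sub>R (x / (x + h x))) =
      (\<lambda>x. indicator {0..b} x * (x / (x + indicator {0..b} x *\<^sub>R h x)))"
    by (auto simp: indicator_def fun_eq_iff)
  ultimately show "set_borel_measurable lborel {0..b} (\<lambda>x. x / (x + h x))"
    unfolding set_borel_measurable_def restrict by measurable
  show "AE x in lborel. x \<in> {0..b} \<longrightarrow> norm (x / (x + h x)) \<le> norm (1 :: real)"
  proof (rule AE_I2, safe)
    fix x assume "x \<in> {0..b}"
    then have "0 \<le> x" "0 \<le> h x" using assms(1) by auto
    then show "norm (x / (x + h x)) \<le> norm (1 :: real)"
      by (cases "x + h x = 0") (auto simp: divide_le_eq)
  qed
qed

lemma set_integrable_opt_density: "set_integrable lborel {0..b} (opt_density c)"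
  unfolding set_integrable_def opt_density_def
  by (rule borel_integrable_compact) (auto intro!: continuous_intros)

lemma set_integrable_opt_ratio: "set_integrable lborel {0..b} (\<lambda>x. x / (x + opt_density c x))"
  by (intro set_integrable_ratio set_integrable_opt_density ballI opt_density_nonneg)

lemma set_integral_opt_density:
  assumes "0 < c" and "0 \<le> b"
  shows "(LINT x:{0..b}|lborel. opt_density c x) = opt_density_integral c b"
  using set_borel_integral_eq_integral(2)[OF set_integrable_opt_density]
    has_integral_opt_density[OF assms]
  by (simp add: integral_unique)

lemma set_integral_opt_ratio:
  assumes "0 < c" and "0 \<le> b"
  shows "(LINT x:{0..b}|lborel. x / (x + opt_density c x)) = opt_ratio_integral c b"
  using set_borel_integral_eq_integral(2)[OF set_integrable_opt_ratio]
    has_integral_opt_ratio[OF assms]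
  by (simp add: integral_unique)

lemma lagrangian_lower_bound:
  fixes h :: "real \<Rightarrow> real"
  assumes "0 < c" and "0 \<le> b" and h: "\<forall>x\<in>{0..b}. 0 \<le> h x" "set_integrable lborel {0..b} h"
  shows "opt_ratio_integral c b + (opt_density_integral c b - (LINT x:{0..b}|lborel. h x)) / c\<^sup>2
    \<le> (LINT x:{0..b}|lborel. x / (x + h x))"
proof -
  let ?hc = "opt_density c"
  have "opt_ratio_integral c b + (opt_density_integral c b - (LINT x:{0..b}|lborel. h x)) / c\<^sup>2
      = (LINT x:{0..b}|lborel. x / (x + ?hc x) + ?hc x / c\<^sup>2 - h x / c\<^sup>2)"
    using h(2) set_integrable_opt_ratio set_integrable_opt_density
    by (simp add: set_integral_diff set_integral_add set_integral_opt_density[OF assms(1,2)]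
        set_integral_opt_ratio[OF assms(1,2)] diff_divide_distrib)
  also have "\<dots> \<le> (LINT x:{0..b}|lborel. x / (x + h x))"
  proof (rule set_integral_mono)
    show "set_integrable lborel {0..b} (\<lambda>x. x / (x + ?hc x) + ?hc x / c\<^sup>2 - h x / c\<^sup>2)"
      using h(2) set_integrable_opt_ratio set_integrable_opt_density
      by (intro set_integral_add set_integral_diff set_integrable_divide)
    show "set_integrable lborel {0..b} (\<lambda>x. x / (x + h x))"
      using h by (rule set_integrable_ratio)
    fix x assume "x \<in> {0..b}"
    then have "0 \<le> x" "0 \<le> h x" using h(1) by auto
    then show "x / (x + ?hc x) + ?hc x / c\<^sup>2 - h x / c\<^sup>2 \<le> x / (x + h x)"
      using opt_density_minimizes_lagrangian[OF assms(1), of x "h x"] by linarith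
  qed
  finally show ?thesis .
qed

definition objective_values :: "real \<Rightarrow> real \<Rightarrow> real set" where
  "objective_values \<alpha> \<tau> = {(LINT x:{0..1}|lborel. x / (x + \<alpha> * g x)) | g :: real \<Rightarrow> real.
      (\<forall>x\<in>{0..1}. g x \<ge> 0) \<and> set_integrable lborel {0..1} g \<and> (LINT x:{0..1}|lborel. g x) = \<tau>}"

lemma opt_ratio_integral_least_objective_value:
  assumes "0 < c" and "0 < \<alpha>" and budget: "opt_density_integral c 1 = \<alpha> * \<tau>"
  shows "opt_ratio_integral c 1 \<in> objective_values \<alpha> \<tau>"
    and "\<forall>v\<in>objective_values \<alpha> \<tau>. opt_ratio_integral c 1 \<le> v"
proof -
  let ?g = "\<lambda>x. opt_density c x / \<alpha>"
  have "(LINT x:{0..1}|lborel. ?g x) = \<tau>"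
    using budget assms(2) by (simp add: set_integral_divide_zero set_integral_opt_density[OF assms(1)])
  moreover have "(LINT x:{0..1}|lborel. x / (x + \<alpha> * ?g x)) = opt_ratio_integral c 1"
    using assms(2) set_integral_opt_ratio[OF assms(1)] by simp
  ultimately show "opt_ratio_integral c 1 \<in> objective_values \<alpha> \<tau>"
    unfolding objective_values_def using assms(2)
    by (intro CollectI exI[of _ ?g]) (auto simp: opt_density_nonneg set_integrable_opt_density)
  show "\<forall>v\<in>objective_values \<alpha> \<tau>. opt_ratio_integral c 1 \<le> v"
  proof
    fix v assume "v \<in> objective_values \<alpha> \<tau>"
    then obtain g where g: "\<forall>x\<in>{0..1}. g x \<ge> 0" "set_integrable lborel {0..1} g"
      "(LINT x:{0..1}|lborel. g x) = \<tau>" and v: "v = (LINT x:{0..1}|lborel. x / (x + \<alpha> * g x))"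
      unfolding objective_values_def by blast
    have "opt_ratio_integral c 1 + (opt_density_integral c 1 - (LINT x:{0..1}|lborel. \<alpha> * g x)) / c\<^sup>2 \<le> v"
      unfolding v using g assms(2) by (intro lagrangian_lower_bound assms(1)) auto
    then show "opt_ratio_integral c 1 \<le> v" using g(3) budget by simp
  qed
qed

lemma objective_values_zero_budget:
  assumes "0 \<le> \<alpha>"
  shows "1 \<in> objective_values \<alpha> 0" and "\<forall>v\<in>objective_values \<alpha> 0. 1 \<le> v"
proof -
  have "set_integrable lborel {0..1} (\<lambda>x. x / (x + 0 :: real))"
    by (rule set_integrable_ratio) (auto simp: set_integrable_def)
  moreover have "((\<lambda>x. x / (x + 0 :: real)) has_integral 1) {0..1}"
    by (rule has_integral_spike_finite[where S = "{0}" and f = "\<lambda>_. 1"])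
      (auto intro: has_integral_const_real[of 1 0 1, simplified])
  ultimately have "(LINT x:{0..1}|lborel. x / (x + \<alpha> * 0)) = 1"
    by (simp add: set_borel_integral_eq_integral(2) integral_unique)
  moreover have "set_integrable lborel {0..1} (\<lambda>_. 0 :: real)"
    by (simp add: set_integrable_def)
  ultimately show "1 \<in> objective_values \<alpha> 0"
    unfolding objective_values_def by (intro CollectI exI[of _ "\<lambda>_. 0"]) simp
  show "\<forall>v\<in>objective_values \<alpha> 0. 1 \<le> v"
  proof
    fix v assume "v \<in> objective_values \<alpha> 0"
    then obtain g where g: "\<forall>x\<in>{0..1}. g x \<ge> 0" "set_integrable lborel {0..1} g"
      "(LINT x:{0..1}|lborel. g x) = 0" and v: "v = (LINT x:{0..1}|lborel. x / (x + \<alpha> * g x))"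
      unfolding objective_values_def by blast
    show "1 \<le> v"
    proof (rule field_le_epsilon)
      fix e :: real assume "0 < e"
      define c where "c = sqrt (min e (1 / 2))"
      have c: "0 < c" "c\<^sup>2 = min e (1 / 2)" using \<open>0 < e\<close> by (auto simp: c_def)
      have "opt_ratio_integral c 1 + (opt_density_integral c 1 - (LINT x:{0..1}|lborel. \<alpha> * g x)) / c\<^sup>2 \<le> v"
        unfolding v using g assms by (intro lagrangian_lower_bound c(1)) (auto intro: mult_nonneg_nonneg)
      moreover have "opt_ratio_integral c 1 + opt_density_integral c 1 / c\<^sup>2 = 1 - c\<^sup>2 / 6"
        using c by (simp add: opt_ratio_integral_def opt_density_integral_def power4_eq_xxxx
            power2_eq_square field_simps)
      ultimately have "1 - c\<^sup>2 / 6 \<le> v" using g(3) by simp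
      moreover have "c\<^sup>2 \<le> e" using c(2) by simp
      ultimately show "1 \<le> v + e" using zero_le_power2[of c] by linarith
    qed
  qed
qed

(* The two branches of the max cross at s = 1/3, i.e. at alpha tau = 1/6. *)
lemma branch_gap_eq_cube:
  fixes s :: real
  shows "1 - s - 8 / (9 * (1 + 3 * s\<^sup>2)) = (1 - 3 * s) ^ 3 / (9 * (1 + 3 * s\<^sup>2))"
proof -
  have "0 < 9 * (1 + 3 * s\<^sup>2)" by (simp add: add_pos_nonneg)
  then show ?thesis by (simp add: field_simps power2_eq_square power3_eq_cube)
qed

lemma exists_budget_multiplier:
  assumes "0 < \<beta>"
  obtains c where "0 < c" and "opt_density_integral c 1 = \<beta>"
    and "opt_ratio_integral c 1 = max (1 - sqrt (2 / 3 * \<beta>)) (4 / 9 * (1 / (1 / 2 + \<beta>)))"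
proof -
  define s where "s = sqrt (2 / 3 * \<beta>)"
  have s: "0 < s" "\<beta> = 3 * s\<^sup>2 / 2" using assms by (auto simp: s_def)
  have "4 / 9 * (1 / (1 / 2 + \<beta>)) = 8 / (9 * (1 + 3 * s\<^sup>2))"
    using s by (simp add: field_simps)
  then have max_eq: "max (1 - sqrt (2 / 3 * \<beta>)) (4 / 9 * (1 / (1 / 2 + \<beta>)))
      = max (1 - s) (8 / (9 * (1 + 3 * s\<^sup>2)))"
    unfolding s_def by simp
  have denom: "0 < 9 * (1 + 3 * s\<^sup>2)" by (simp add: add_pos_nonneg)
  show ?thesis
  proof (cases "s < 1 / 3")
    case True
    then have "0 \<le> (1 - 3 * s) ^ 3 / (9 * (1 + 3 * s\<^sup>2))"
      using denom by simp
    then have max_branch: "max (1 - s) (8 / (9 * (1 + 3 * s\<^sup>2))) = 1 - s"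
      using branch_gap_eq_cube[of s] by simp
    define c where "c = sqrt (3 * s)"
    have c: "0 < c" "c\<^sup>2 = 3 * s" using s by (auto simp: c_def)
    have "opt_density_integral c 1 = \<beta>"
      using c True s by (simp add: opt_density_integral_def power4_eq_xxxx power2_eq_square)
    moreover have "opt_ratio_integral c 1 = 1 - s"
      using c True by (simp add: opt_ratio_integral_def)
    ultimately show ?thesis using that[of c] c(1) max_eq max_branch by simp
  next
    case False
    then have "(1 - 3 * s) ^ 3 / (9 * (1 + 3 * s\<^sup>2)) \<le> 0"
      using denom by (simp add: divide_nonpos_pos)
    then have max_branch: "max (1 - s) (8 / (9 * (1 + 3 * s\<^sup>2))) = 8 / (9 * (1 + 3 * s\<^sup>2))"
      using branch_gap_eq_cube[of s] by simp
    define c where "c = 3 * (1 + 3 * s\<^sup>2) / 4"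
    have "1 \<le> c"
      using False mult_mono[of "1/3" s "1/3" s] by (simp add: c_def power2_eq_square)
    then have "1 \<le> c\<^sup>2" by (simp add: one_le_power)
    then have "opt_density_integral c 1 = \<beta>" and "opt_ratio_integral c 1 = 8 / (9 * (1 + 3 * s\<^sup>2))"
      using s by (simp_all add: opt_density_integral_def opt_ratio_integral_def c_def field_simps)
    then show ?thesis using that[of c] \<open>1 \<le> c\<close> max_eq max_branch by simp
  qed
qed

theorem mainTheorem3:
  fixes \<alpha> \<tau> :: real
  assumes "\<alpha> > 0" and "\<tau> \<ge> 0"
  defines "V \<equiv> {(LINT x:{0..1}|lborel. x / (x + \<alpha> * g x)) | g :: real \<Rightarrow> real.
        (\<forall>x\<in>{0..1}. g x \<ge> 0) \<and>
        set_integrable lborel {0..1} g \<and>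
        (LINT x:{0..1}|lborel. g x) = \<tau>}"
  shows "max (1 - sqrt (2/3 * \<alpha> * \<tau>)) (4/9 * (1 / (1/2 + \<alpha> * \<tau>))) \<in> V \<and>
         (\<forall>v\<in>V. max (1 - sqrt (2/3 * \<alpha> * \<tau>)) (4/9 * (1 / (1/2 + \<alpha> * \<tau>))) \<le> v)"
proof -
  have V: "V = objective_values \<alpha> \<tau>"
    unfolding V_def objective_values_def ..
  show ?thesis
  proof (cases "\<tau> = 0")
    case True
    then show ?thesis
      using objective_values_zero_budget[of \<alpha>] assms(1) unfolding V by simp
  next
    case False
    then have "0 < \<alpha> * \<tau>" using assms by simp
    then obtain c where "0 < c" and "opt_density_integral c 1 = \<alpha> * \<tau>"
      and "opt_ratio_integral c 1 = max (1 - sqrt (2 / 3 * (\<alpha> * \<tau>))) (4 / 9 * (1 / (1 / 2 + \<alpha> * \<tau>)))"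
      by (rule exists_budget_multiplier)
    then show ?thesis
      using opt_ratio_integral_least_objective_value[of c \<alpha> \<tau>] assms(1) unfolding V
      by (simp add: mult.assoc)
  qed
qed

end
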